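(* Let $m, n_0, n_1$ be positive integers and $n(\lambda) = n_0 + n_1\lambda$. There do not exist polynomials $x(\lambda), y(\lambda), z(\lambda)$ with real coefficients, two of which have degree $1$ and the third of which has degree $3$, whose constant terms $x_0 = x(0)$, $y_0 = y(0)$, $z_0 = z(0)$ are positive rational numbers satisfying $m/n_0 = 1/x_0 + 1/y_0 + 1/z_0$, and which satisfy $$\frac{m}{n(\lambda)} = \frac{1}{x(\lambda)} + \frac{1}{y(\lambda)} + \frac{1}{z(\lambda)}$$ identically in $\lambda$.
   Context: $\lambda$ is an indeterminate; the equation is an identity of rational functions in $\lambda$. *)

theory Defs
  imports Complex_Main "HOL-Computational_Algebra.Polynomial"
begin

end

theory Submission
  imports Defs
begin

text \<open>Let \<open>x, y\<close> be the linear polynomials and \<open>z\<close> the cubic one.  Clearing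
  denominators turns the identity into \<open>z \<cdot> D = n x y\<close> with \<open>D = m x y - n (x + y)\<close>.
  Comparing degrees forces \<open>D\<close> to be a constant \<open>d\<close>, and evaluating at \<open>0\<close> shows
  \<open>d > 0\<close>.  But then \<open>(m x - n)(m y - n) = n\<^sup>2 + m d\<close>: the left side is a product of
  two linear real polynomials and so has a real root, while the right side is positive
  everywhere.\<close>

lemma poly_eq_off_roots:
  fixes p q r :: "'a::{idom,ring_char_0} poly"
  assumes "r \<noteq> 0" and "\<And>l. poly r l \<noteq> 0 \<Longrightarrow> poly p l = poly q l"
  shows "p = q"
proof (rule ccontr)
  assume "p \<noteq> q"
  then have "finite ({l. poly (p - q) l = 0} \<union> {l. poly r l = 0})"
    using assms(1) by (intro finite_UnI poly_roots_finite) auto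
  moreover have "{l. poly (p - q) l = 0} \<union> {l. poly r l = 0} = UNIV"
    using assms(2) by auto
  ultimately show False
    using infinite_UNIV_char_0 by metis
qed

lemma unit_fractions_poly_eq:
  fixes n x y z :: "'a::field_char_0 poly"
  assumes "n * x * y * z \<noteq> 0"
    and "\<And>l. poly n l \<noteq> 0 \<Longrightarrow> poly x l \<noteq> 0 \<Longrightarrow> poly y l \<noteq> 0 \<Longrightarrow> poly z l \<noteq> 0 \<Longrightarrow>
           c / poly n l = 1 / poly x l + 1 / poly y l + 1 / poly z l"
  shows "smult c (x * y * z) = n * (y * z + x * z + x * y)"
proof (rule poly_eq_off_roots[OF assms(1)])
  fix l
  assume "poly (n * x * y * z) l \<noteq> 0"
  then have "poly n l \<noteq> 0" "poly x l \<noteq> 0" "poly y l \<noteq> 0" "poly z l \<noteq> 0"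
    by auto
  with assms(2)[OF this] show "poly (smult c (x * y * z)) l = poly (n * (y * z + x * z + x * y)) l"
    by (simp add: field_simps)
qed

lemma degree_one_poly_has_root:
  fixes p :: "'a::field poly"
  assumes "degree p = 1"
  obtains r where "poly p r = 0"
proof -
  obtain a b where "p = [:b, a:]" "a \<noteq> 0"
    using degree1_coeffs[OF assms] by metis
  then have "poly p (- b / a) = 0"
    by simp
  then show thesis
    by (rule that)
qed

lemma no_linear_polys_product_sum_eq_pos_const:
  fixes c d :: real and x y n :: "real poly"
  assumes "degree x \<le> 1" "degree y \<le> 1" "degree n = 1" "c > 0" "d > 0"
    and "smult c (x * y) - n * (x + y) = [:d:]"
  shows False
proof -
  have factor: "(smult c x - n) * (smult c y - n) = n * n + [:c * d:]"
  proof -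
    have "(smult c x - n) * (smult c y - n) = smult c (smult c (x * y) - n * (x + y)) + n * n"
      by (simp add: algebra_simps smult_diff_right smult_add_right)
    then show ?thesis
      using assms(6) by simp
  qed
  have "n \<noteq> 0"
    using assms(3) by auto
  then have "degree (n * n + [:c * d:]) = 2"
    using assms(3) by (subst degree_add_eq_left) (auto simp: degree_mult_eq)
  then have "degree (smult c x - n) + degree (smult c y - n) = 2"
    by (metis factor degree_mult_eq degree_0 mult_zero_left mult_zero_right zero_neq_numeral)
  moreover have "degree (smult c x - n) \<le> 1" "degree (smult c y - n) \<le> 1"
    using assms(1-3) by (auto intro: degree_diff_le)
  ultimately have "degree (smult c x - n) = 1"
    by linarith
  then obtain r where "poly (smult c x - n) r = 0"
    by (rule degree_one_poly_has_root)
  then have "poly n r * poly n r + c * d = 0"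
    using arg_cong[OF factor, of "\<lambda>p. poly p r"] by simp
  moreover have "poly n r * poly n r + c * d > 0"
    using assms(4,5) by (simp add: add_nonneg_pos)
  ultimately show False
    by simp
qed

lemma no_unit_fractions_poly_eq_degrees_113:
  fixes c :: real and n x y z :: "real poly"
  assumes "c > 0" "degree n = 1" "degree x = 1" "degree y = 1" "degree z = 3"
    and "poly n 0 > 0" "poly x 0 > 0" "poly y 0 > 0" "poly z 0 > 0"
    and "smult c (x * y * z) = n * (y * z + x * z + x * y)"
  shows False
proof -
  define D where "D = smult c (x * y) - n * (x + y)"
  have zD: "z * D = n * x * y"
    using assms(10) by (simp add: D_def algebra_simps)
  have nonzero: "n \<noteq> 0" "x \<noteq> 0" "y \<noteq> 0" "z \<noteq> 0"
    using assms(2-5) by auto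
  then have "degree (n * x * y) = 3"
    using assms(2-4) by (simp add: degree_mult_eq)
  moreover have "D \<noteq> 0"
    using zD nonzero by auto
  ultimately have "degree z + degree D = 3"
    using zD nonzero by (metis degree_mult_eq)
  then obtain d where D_const: "D = [:d:]"
    using assms(5) degree0_coeffs[of D] by auto
  have "d * poly z 0 = poly n 0 * poly x 0 * poly y 0"
    using arg_cong[OF zD, of "\<lambda>p. poly p 0"] D_const by simp
  then have "d > 0"
    using assms(6-9) by (metis mult_pos_pos zero_less_mult_pos2)
  then show False
    using no_linear_polys_product_sum_eq_pos_const[of x y n c d] assms(1-4) D_const
    unfolding D_def by simp
qed

lemma no_unit_fraction_decomposition_degrees_113:
  fixes c :: real and n x y z :: "real poly"
  assumes "c > 0" "degree n = 1" "poly n 0 > 0"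
    and degrees: "(degree x = 1 \<and> degree y = 1 \<and> degree z = 3) \<or>
      (degree x = 1 \<and> degree y = 3 \<and> degree z = 1) \<or>
      (degree x = 3 \<and> degree y = 1 \<and> degree z = 1)"
    and pos: "poly x 0 > 0" "poly y 0 > 0" "poly z 0 > 0"
    and identity: "\<And>l. poly n l \<noteq> 0 \<Longrightarrow> poly x l \<noteq> 0 \<Longrightarrow> poly y l \<noteq> 0 \<Longrightarrow>
      poly z l \<noteq> 0 \<Longrightarrow> c / poly n l = 1 / poly x l + 1 / poly y l + 1 / poly z l"
  shows False
proof -
  have "n * x * y * z \<noteq> 0"
    using assms(2) degrees by auto
  then have eq: "smult c (x * y * z) = n * (y * z + x * z + x * y)"
    using identity by (rule unit_fractions_poly_eq)
  from degrees show False
  proof (elim disjE conjE)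
    assume "degree x = 1" "degree y = 1" "degree z = 3"
    then show False
      using no_unit_fractions_poly_eq_degrees_113[of c n x y z] assms(1-3) pos eq by simp
  next
    assume "degree x = 1" "degree y = 3" "degree z = 1"
    then show False
      using no_unit_fractions_poly_eq_degrees_113[of c n x z y] assms(1-3) pos eq
      by (simp add: ac_simps)
  next
    assume "degree x = 3" "degree y = 1" "degree z = 1"
    then show False
      using no_unit_fractions_poly_eq_degrees_113[of c n y z x] assms(1-3) pos eq
      by (simp add: ac_simps)
  qed
qed

theorem lemma5:
  fixes m n0 n1 :: nat
  assumes "m > 0" and "n0 > 0" and "n1 > 0"
  shows "\<not> (\<exists>x y z :: real poly.
           ((degree x = 1 \<and> degree y = 1 \<and> degree z = 3) \<or>
            (degree x = 1 \<and> degree y = 3 \<and> degree z = 1) \<or>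
            (degree x = 3 \<and> degree y = 1 \<and> degree z = 1)) \<and>
           poly x 0 \<in> \<rat> \<and> poly y 0 \<in> \<rat> \<and> poly z 0 \<in> \<rat> \<and>
           poly x 0 > 0 \<and> poly y 0 > 0 \<and> poly z 0 > 0 \<and>
           real m / real n0 = 1 / poly x 0 + 1 / poly y 0 + 1 / poly z 0 \<and>
           (\<forall>l::real. poly [:real n0, real n1:] l \<noteq> 0 \<and> poly x l \<noteq> 0 \<and>
                        poly y l \<noteq> 0 \<and> poly z l \<noteq> 0 \<longrightarrow>
              real m / poly [:real n0, real n1:] l = 1 / poly x l + 1 / poly y l + 1 / poly z l))"
proof (intro notI, elim exE conjE)
  fix x y z :: "real poly"
  assume degrees: "(degree x = 1 \<and> degree y = 1 \<and> degree z = 3) \<or>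
      (degree x = 1 \<and> degree y = 3 \<and> degree z = 1) \<or>
      (degree x = 3 \<and> degree y = 1 \<and> degree z = 1)"
    and pos: "poly x 0 > 0" "poly y 0 > 0" "poly z 0 > 0"
    and identity: "\<forall>l. poly [:real n0, real n1:] l \<noteq> 0 \<and> poly x l \<noteq> 0 \<and>
      poly y l \<noteq> 0 \<and> poly z l \<noteq> 0 \<longrightarrow>
      real m / poly [:real n0, real n1:] l = 1 / poly x l + 1 / poly y l + 1 / poly z l"
  have "real m > 0" "degree [:real n0, real n1:] = 1" "poly [:real n0, real n1:] 0 > 0"
    using assms by auto
  with degrees pos identity show False
    using no_unit_fraction_decomposition_degrees_113[of "real m" "[:real n0, real n1:]" x y z]
    by blast
qed

end
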